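(* Let $\Sigma$ be a finite alphabet, $S=s_0\cdots s_{m-1}\in\Sigma^m$, and $a,a'\in\Sigma^m$ with $\mathrm{rep}_{\mathrm{Sub}(S)}(a)=\mathrm{rep}_{\mathrm{Sub}(S)}(a')$. Then $f^S_{\mathrm{B(N)DM}}(a)=f^S_{\mathrm{B(N)DM}}(a')$ and $g^S_{\mathrm{B(N)DM}}(a)=g^S_{\mathrm{B(N)DM}}(a')$.
   Context: $\mathrm{Sub}(S)$ is the set of all substrings of $S$, including $\varepsilon$; $\mathrm{rep}_{\mathrm{Sub}(S)}(a)$ is the longest suffix of $a$ that is a substring of $S$. Let $S^{\mathrm{rev}}=s_{m-1}\cdots s_0$. The suffix automaton of $S^{\mathrm{rev}}$ is the deterministic automaton accepting exactly the suffixes of $S^{\mathrm{rev}}$, extended with a non-accepting sink FAIL entered as soon as the string read so far is not a substring of $S^{\mathrm{rev}}$. A window $w=w_0\cdots w_{m-1}$ is read from right to left, i.e. the automaton reads $w^{\mathrm{rev}}=w_{m-1}\cdots w_0$. Let $j^S_w$ be the number of transitions performed before entering FAIL (not counting the transition into FAIL). Cost: $f^S_{\mathrm{B(N)DM}}(w)=m$ if $w=S$, otherwise $j^S_w+1$. Let $\mathcal{I}^S(w)\subseteq\{0,\dots,m-1\}$ be the set of $i$ such that the automaton is in an accepting state after reading $i$ characters of $w^{\mathrm{rev}}$ (equivalently, $w_{m-i}\cdots w_{m-1}$ is a prefix of $S$). Shift: $g^S_{\mathrm{B(N)DM}}(w)=\min\{m-i: i\in\mathcal{I}^S(w)\}$.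 *)

theory Defs
  imports Main "HOL-Library.Sublist"
begin

text \<open>Strings are lists; \<open>w ! i\<close> is \<open>w_i\<close>. \<open>Sub(S)\<close> = contiguous sublists (incl. []).\<close>

definition rep_Sub :: "'a list \<Rightarrow> 'a list \<Rightarrow> 'a list" where
  "rep_Sub S a = drop (LEAST k. sublist (drop k a) S) a"

text \<open>After reading i characters of the reversed window, the string read is
  \<open>take i (rev w)\<close>. The automaton for \<open>rev S\<close> is not in FAIL after i steps iff
  every string read so far is a substring of \<open>rev S\<close>; it is accepting iff
  moreover the string read is a suffix of \<open>rev S\<close>.\<close>

definition not_fail :: "'a list \<Rightarrow> 'a list \<Rightarrow> nat \<Rightarrow> bool" where
  "not_fail S w i = (\<forall>k\<le>i. sublist (take k (rev w)) (rev S))"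

definition accepting :: "'a list \<Rightarrow> 'a list \<Rightarrow> nat \<Rightarrow> bool" where
  "accepting S w i = (not_fail S w i \<and> suffix (take i (rev w)) (rev S))"

definition j_steps :: "'a list \<Rightarrow> 'a list \<Rightarrow> nat" where
  "j_steps S w = (GREATEST i. i \<le> length w \<and> not_fail S w i)"

definition f_BDM :: "'a list \<Rightarrow> 'a list \<Rightarrow> nat" where
  "f_BDM S w = (if w = S then length S else j_steps S w + 1)"

definition I_set :: "'a list \<Rightarrow> 'a list \<Rightarrow> nat set" where
  "I_set S w = {i. i < length S \<and> accepting S w i}"

definition g_BDM :: "'a list \<Rightarrow> 'a list \<Rightarrow> nat" where
  "g_BDM S w = Min ((\<lambda>i. length S - i) ` I_set S w)"

end

theory Submission
  imports Defs
begin

text \<open>Reading the window from right to left, the automaton only ever sees suffixes of the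
  window. The suffixes of \<open>w\<close> that are substrings of \<open>S\<close> are exactly the suffixes of
  \<open>rep_Sub S w\<close>, so whether the run has failed after \<open>i\<close> steps, and whether it accepts
  there, depends on \<open>w\<close> only through \<open>rep_Sub S w\<close>. So does the test \<open>w = S\<close>: a window
  of length \<open>|S|\<close> equals \<open>S\<close> iff its representative is all of \<open>S\<close>.\<close>

lemma rep_Sub_eq_drop_Least:
  obtains k where "rep_Sub S w = drop k w" "sublist (drop k w) S"
    "\<And>k'. sublist (drop k' w) S \<Longrightarrow> k \<le> k'"
proof
  have "sublist (drop (length w) w) S" by simp
  then show "sublist (drop (LEAST k. sublist (drop k w) S) w) S" by (rule LeastI)
qed (auto simp: rep_Sub_def intro: Least_le)

lemma suffix_rep_Sub: "suffix (rep_Sub S w) w"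
  by (metis rep_Sub_eq_drop_Least suffix_drop)

lemma sublist_rep_Sub: "sublist (rep_Sub S w) S"
  by (metis rep_Sub_eq_drop_Least)

lemma suffix_eq_drop: "suffix u w \<Longrightarrow> u = drop (length w - length u) w"
  using suffixE by fastforce

lemma suffix_drop_drop: "k \<le> n \<Longrightarrow> suffix (drop n w) (drop k w)"
  by (metis add.commute drop_drop nat_le_iff_add suffix_drop)

lemma suffix_iff_length_le:
  assumes "suffix u w" "suffix v w"
  shows "suffix u v \<longleftrightarrow> length u \<le> length v"
  using assms suffix_length_le suffix_length_suffix by blast

lemma sublist_iff_suffix_rep_Sub:
  assumes "suffix u w"
  shows "sublist u S \<longleftrightarrow> suffix u (rep_Sub S w)"
proof
  obtain k where k: "rep_Sub S w = drop k w" "\<And>k'. sublist (drop k' w) S \<Longrightarrow> k \<le> k'"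
    using rep_Sub_eq_drop_Least by metis
  have u: "u = drop (length w - length u) w"
    using assms by (rule suffix_eq_drop)
  assume "sublist u S"
  then have "k \<le> length w - length u" using k(2) u by simp
  then show "suffix u (rep_Sub S w)" using k(1) u suffix_drop_drop by metis
next
  show "suffix u (rep_Sub S w) \<Longrightarrow> sublist u S"
    using sublist_rep_Sub suffix_imp_sublist sublist_order.order_trans by blast
qed

lemma sublist_drop_iff_le_length_rep_Sub:
  assumes "i \<le> length w"
  shows "sublist (drop (length w - i) w) S \<longleftrightarrow> i \<le> length (rep_Sub S w)"
  using assms sublist_iff_suffix_rep_Sub[OF suffix_drop, of "length w - i" w S]
    suffix_iff_length_le[OF suffix_drop suffix_rep_Sub, of "length w - i" w S]
  by simp

lemma drop_rep_Sub:
  assumes "i \<le> length (rep_Sub S w)"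
  shows "drop (length (rep_Sub S w) - i) (rep_Sub S w) = drop (length w - i) w"
  using assms suffix_eq_drop[OF suffix_order.trans[OF suffix_drop suffix_rep_Sub]]
  by (metis diff_diff_cancel length_drop)

lemma not_fail_iff_le_length_rep_Sub:
  assumes "i \<le> length w"
  shows "not_fail S w i \<longleftrightarrow> i \<le> length (rep_Sub S w)"
proof -
  have "not_fail S w i \<longleftrightarrow> (\<forall>k\<le>i. k \<le> length (rep_Sub S w))"
    unfolding not_fail_def using assms
    by (auto simp: take_rev sublist_rev sublist_drop_iff_le_length_rep_Sub)
  then show ?thesis by auto
qed

lemma accepting_iff_rep_Sub:
  assumes "i \<le> length w"
  shows "accepting S w i \<longleftrightarrow>
    i \<le> length (rep_Sub S w) \<and> prefix (drop (length (rep_Sub S w) - i) (rep_Sub S w)) S"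
  using assms drop_rep_Sub[of i S w]
  by (auto simp: accepting_def not_fail_iff_le_length_rep_Sub take_rev suffix_to_prefix)

lemma eq_iff_rep_Sub_eq:
  assumes "length w = length S"
  shows "w = S \<longleftrightarrow> rep_Sub S w = S"
proof
  show "rep_Sub S w = S \<Longrightarrow> w = S"
    using assms suffix_rep_Sub[of S w] suffix_iff_length_le[of w w S] by (simp add: suffix_order.antisym)
  show "w = S \<Longrightarrow> rep_Sub S w = S"
    using sublist_iff_suffix_rep_Sub[of S S S] suffix_rep_Sub[of S S]
    by (simp add: suffix_order.antisym)
qed

theorem lemma19:
  fixes \<Sigma> :: "'a set" and S a a' :: "'a list" and m :: nat
  assumes "finite \<Sigma>"
    and "length S = m" and "set S \<subseteq> \<Sigma>"
    and "length a = m" and "set a \<subseteq> \<Sigma>"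
    and "length a' = m" and "set a' \<subseteq> \<Sigma>"
    and "rep_Sub S a = rep_Sub S a'"
  shows "f_BDM S a = f_BDM S a' \<and> g_BDM S a = g_BDM S a'"
proof -
  have not_fail: "not_fail S a i \<longleftrightarrow> not_fail S a' i" if "i \<le> m" for i
    using that assms by (simp add: not_fail_iff_le_length_rep_Sub)
  have accepting: "accepting S a i \<longleftrightarrow> accepting S a' i" if "i \<le> m" for i
    using that assms by (simp add: accepting_iff_rep_Sub)
  have "j_steps S a = j_steps S a'"
    unfolding j_steps_def using not_fail assms(4,6) by (metis (lifting))
  moreover have "a = S \<longleftrightarrow> a' = S"
    using assms(2,4,6,8) eq_iff_rep_Sub_eq by metis
  moreover have "I_set S a = I_set S a'"
    unfolding I_set_def using accepting assms(2) by auto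
  ultimately show ?thesis unfolding f_BDM_def g_BDM_def by simp
qed
end
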